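(* In the Call-by-Value probabilistic $\lambda$-calculus (as defined in the context), $\Rrightarrow_E$ is asymptotically complete for $\Rightarrow$: for every multi-distribution $\mathbf m$, if $\mathbf m\Rightarrow^{\mathrm{obs}_{\mathrm{Nnf}}}\mathbf r$ then $\mathbf m\Rrightarrow_E^{\mathrm{obs}_{\mathrm{Nnf}}}\mathbf s$ for some $\mathbf s$ with $\mathbf r\le\mathbf s$.
   Context: Terms $\Lambda_\oplus$: $M::=x\mid\lambda x.M\mid MM\mid M\oplus M$; values $V::=x\mid\lambda x.M$. Contexts $C::=[\,]\mid MC\mid CM\mid\lambda x.C\mid C\oplus M\mid M\oplus C$; weak contexts $W::=[\,]\mid WM\mid MW$. A multi-distribution is a finite multiset $[p_iM_i]_{i\in I}$ with $p_i\in(0,1]$, $\sum_ip_i\le1$; $+$ is multiset union, $q\cdot[p_iM_i]_i=[(qp_i)M_i]_i$, $[M]:=[1M]$. $C[(\lambda x.M)V]\to_{\beta_v}[C[M\{V/x\}]]$; $W[M\oplus N]\to_\oplus[\tfrac12W[M],\tfrac12W[N]]$; $\to:=\to_{\beta_v}\cup\to_\oplus$; surface reduction $\to_s$ is $\to_\oplus$ together with the closure of $\beta_v$ under weak contexts. $M$ is $\to$-normal (surface-normal) if no $\mathbf m$ with $M\to\mathbf m$ ($M\to_s\mathbf m$); $\mathrm{Nnf}$ is the set of $\to$-normal terms. Lifting $\Rightarrow_r$ of $r$: least relation with $[M]\Rightarrow_r[M]$; $[M]\Rightarrow_r\mathbf m$ if $M\,r\,\mathbf m$; $[p_iM_i]_{i\in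 I}\Rightarrow_r\sum_ip_i\cdot\mathbf m_i$ if $[M_i]\Rightarrow_r\mathbf m_i$ for all $i$. Full lifting $\Rrightarrow_r$: same but the first rule $[M]\Rrightarrow_r[M]$ only when $M$ is $\to$-normal. $\Rightarrow$ is the lifting of $\to$. Let $\rightsquigarrow_U$ be the unbiased iteration of weak $\beta_v$-reduction on $\Lambda_\oplus$: if $M\to_wM'$ (closure of $\beta_v$ under weak contexts) then $M\rightsquigarrow_UM'$; if $M$ is $\to_w$-normal: $\lambda x.P\rightsquigarrow_U\lambda x.P'$, $PQ\rightsquigarrow_UP'Q$, $PQ\rightsquigarrow_UPQ'$, $P\oplus Q\rightsquigarrow_UP'\oplus Q$, $P\oplus Q\rightsquigarrow_UP\oplus Q'$ whenever $P\rightsquigarrow_UP'$, resp. $Q\rightsquigarrow_UQ'$. $\rightsquigarrow_E$: if $M$ is not surface-normal and $M\to_s\mathbf m$ then $M\rightsquigarrow_E\mathbf m$; if $M$ is surface-normal and $M\rightsquigarrow_UM'$ then $M\rightsquigarrow_E[M']$; $\Rrightarrow_E$ is its full lifting. $\mathrm{obs}_{\mathrm{Nnf}}([p_iM_i]_{i\in I})$ is the subdistribution $\mu$ on $\mathrm{Nnf}$ with $\mu(N)=\sum_{i:\,M_i=N}p_i$, subdistributions ordered pointwise. For a relation $R$ on multi-distributions, $\mathbf m\,R^{\mathrm{obs}_{\mathrm{Nnf}}}\,\mathbf r$ means there is a maximal $R$-sequence $(\mathbf m_n)_n$ from $\mathbf m$ (infinite, or finite ending in an $R$-normal element and then continued constantly)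 with $\sup_n\mathrm{obs}_{\mathrm{Nnf}}(\mathbf m_n)=\mathbf r$. *)

theory Defs
  imports Complex_Main "HOL-Library.Multiset"
begin

section \<open>Terms of the probabilistic lambda calculus (de Bruijn indices)\<close>

datatype trm = Var nat | Lam trm | App trm trm | Choice trm trm

fun is_value :: "trm \<Rightarrow> bool" where
  "is_value (Var x) = True"
| "is_value (Lam M) = True"
| "is_value (App M N) = False"
| "is_value (Choice M N) = False"

fun shift :: "nat \<Rightarrow> trm \<Rightarrow> trm" where
  "shift c (Var i) = (if i < c then Var i else Var (Suc i))"
| "shift c (Lam M) = Lam (shift (Suc c) M)"
| "shift c (App M N) = App (shift c M) (shift c N)"
| "shift c (Choice M N) = Choice (shift c M) (shift c N)"

text \<open>Capture-avoiding substitution of V for index k (the binder being removed).\<close>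
fun subst :: "trm \<Rightarrow> nat \<Rightarrow> trm \<Rightarrow> trm" where
  "subst (Var i) k V = (if i < k then Var i else if i = k then V else Var (i - 1))"
| "subst (Lam M) k V = Lam (subst M (Suc k) (shift 0 V))"
| "subst (App M N) k V = App (subst M k V) (subst N k V)"
| "subst (Choice M N) k V = Choice (subst M k V) (subst N k V)"

type_synonym mdist = "(real \<times> trm) multiset"

definition is_mdist :: "mdist \<Rightarrow> bool" where
  "is_mdist m \<longleftrightarrow> (\<forall>x \<in># m. 0 < fst x \<and> fst x \<le> 1) \<and> sum_mset (image_mset fst m) \<le> 1"

definition dirac :: "trm \<Rightarrow> mdist" where
  "dirac M = {#(1, M)#}"

definition scale :: "real \<Rightarrow> mdist \<Rightarrow> mdist" where
  "scale q m = image_mset (\<lambda>(p, M). (q * p, M)) m"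

definition map_trm :: "(trm \<Rightarrow> trm) \<Rightarrow> mdist \<Rightarrow> mdist" where
  "map_trm f m = image_mset (\<lambda>(p, M). (p, f M)) m"

inductive beta_full :: "trm \<Rightarrow> trm \<Rightarrow> bool" where
  root: "is_value V \<Longrightarrow> beta_full (App (Lam M) V) (subst M 0 V)"
| appL: "beta_full M M' \<Longrightarrow> beta_full (App M N) (App M' N)"
| appR: "beta_full N N' \<Longrightarrow> beta_full (App M N) (App M N')"
| lam: "beta_full M M' \<Longrightarrow> beta_full (Lam M) (Lam M')"
| choiceL: "beta_full M M' \<Longrightarrow> beta_full (Choice M N) (Choice M' N)"
| choiceR: "beta_full N N' \<Longrightarrow> beta_full (Choice M N) (Choice M N')"

inductive beta_weak :: "trm \<Rightarrow> trm \<Rightarrow> bool" where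
  root: "is_value V \<Longrightarrow> beta_weak (App (Lam M) V) (subst M 0 V)"
| appL: "beta_weak M M' \<Longrightarrow> beta_weak (App M N) (App M' N)"
| appR: "beta_weak N N' \<Longrightarrow> beta_weak (App M N) (App M N')"

inductive oplus_step :: "trm \<Rightarrow> mdist \<Rightarrow> bool" where
  root: "oplus_step (Choice M N) {#(1/2, M), (1/2, N)#}"
| appL: "oplus_step M m \<Longrightarrow> oplus_step (App M N) (map_trm (\<lambda>P. App P N) m)"
| appR: "oplus_step N m \<Longrightarrow> oplus_step (App M N) (map_trm (\<lambda>P. App M P) m)"

definition step :: "trm \<Rightarrow> mdist \<Rightarrow> bool" where
  "step M m \<longleftrightarrow> (\<exists>M'. beta_full M M' \<and> m = dirac M') \<or> oplus_step M m"

definition surface_step :: "trm \<Rightarrow> mdist \<Rightarrow> bool" where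
  "surface_step M m \<longleftrightarrow> (\<exists>M'. beta_weak M M' \<and> m = dirac M') \<or> oplus_step M m"

definition normal :: "trm \<Rightarrow> bool" where
  "normal M \<longleftrightarrow> \<not> (\<exists>m. step M m)"

definition surface_normal :: "trm \<Rightarrow> bool" where
  "surface_normal M \<longleftrightarrow> \<not> (\<exists>m. surface_step M m)"

definition weak_normal :: "trm \<Rightarrow> bool" where
  "weak_normal M \<longleftrightarrow> \<not> (\<exists>M'. beta_weak M M')"

inductive U_step :: "trm \<Rightarrow> trm \<Rightarrow> bool" where
  weak: "beta_weak M M' \<Longrightarrow> U_step M M'"
| lam: "weak_normal (Lam P) \<Longrightarrow> U_step P P' \<Longrightarrow> U_step (Lam P) (Lam P')"
| appL: "weak_normal (App P Q) \<Longrightarrow> U_step P P' \<Longrightarrow> U_step (App P Q) (App P' Q)"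
| appR: "weak_normal (App P Q) \<Longrightarrow> U_step Q Q' \<Longrightarrow> U_step (App P Q) (App P Q')"
| choiceL: "weak_normal (Choice P Q) \<Longrightarrow> U_step P P' \<Longrightarrow> U_step (Choice P Q) (Choice P' Q)"
| choiceR: "weak_normal (Choice P Q) \<Longrightarrow> U_step Q Q' \<Longrightarrow> U_step (Choice P Q) (Choice P Q')"

definition E_step :: "trm \<Rightarrow> mdist \<Rightarrow> bool" where
  "E_step M m \<longleftrightarrow>
     (\<not> surface_normal M \<and> surface_step M m) \<or>
     (surface_normal M \<and> (\<exists>M'. U_step M M' \<and> m = dirac M'))"

text \<open>Lifting of r (the relation \<open>\<Rightarrow>_r\<close>); the third rule is indexed by a list enumerating the multiset.\<close>
inductive lift :: "(trm \<Rightarrow> mdist \<Rightarrow> bool) \<Rightarrow> mdist \<Rightarrow> mdist \<Rightarrow> bool" for r where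
  refl: "lift r (dirac M) (dirac M)"
| step: "r M m \<Longrightarrow> lift r (dirac M) m"
| sum: "list_all2 (\<lambda>x n. lift r (dirac (snd x)) n) xs ns \<Longrightarrow>
        lift r (mset xs) (sum_list (map2 (\<lambda>x n. scale (fst x) n) xs ns))"

inductive full_lift :: "(trm \<Rightarrow> mdist \<Rightarrow> bool) \<Rightarrow> mdist \<Rightarrow> mdist \<Rightarrow> bool" for r where
  refl: "normal M \<Longrightarrow> full_lift r (dirac M) (dirac M)"
| step: "r M m \<Longrightarrow> full_lift r (dirac M) m"
| sum: "list_all2 (\<lambda>x n. full_lift r (dirac (snd x)) n) xs ns \<Longrightarrow>
        full_lift r (mset xs) (sum_list (map2 (\<lambda>x n. scale (fst x) n) xs ns))"

text \<open>Subdistribution on normal forms, as a function trm => real (zero off Nnf).\<close>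
definition obs_Nnf :: "mdist \<Rightarrow> trm \<Rightarrow> real" where
  "obs_Nnf m N = (if normal N then sum_mset (image_mset fst (filter_mset (\<lambda>x. snd x = N) m)) else 0)"

definition maximal_seq :: "(mdist \<Rightarrow> mdist \<Rightarrow> bool) \<Rightarrow> mdist \<Rightarrow> (nat \<Rightarrow> mdist) \<Rightarrow> bool" where
  "maximal_seq R m ms \<longleftrightarrow> ms 0 = m \<and>
     (\<forall>n. R (ms n) (ms (Suc n)) \<or> ((\<nexists>m'. R (ms n) m') \<and> ms (Suc n) = ms n))"

definition obs_rel :: "(mdist \<Rightarrow> mdist \<Rightarrow> bool) \<Rightarrow> mdist \<Rightarrow> (trm \<Rightarrow> real) \<Rightarrow> bool" where
  "obs_rel R m r \<longleftrightarrow> (\<exists>ms. maximal_seq R m ms \<and> r = (\<lambda>N. SUP n. obs_Nnf (ms n) N))"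

end

(*
  Two facts combine. First, any lifted reduction sequence is simulated by a lifted E-sequence
  with the same observation on normal forms. A beta-step anywhere in a term is a parallel
  reduction; a parallel reduction factorises into weak beta-steps followed by an internal
  parallel reduction, and the internal part can be postponed past every E-step (surface steps
  as well as unbiased U-steps), the two sides being paired by a coupling. At the end the
  postponed reduction is harmless: either its target is normal and E reaches it, or neither
  side is normal.

  Second, E has the diamond property on non-normal terms, so by random descent a k-step lifted
  E-sequence never observes more normal forms than the full lifted E-sequence after k steps.
  Hence each observation of the given sequence is bounded by a stage of the full E-sequence,
  and therefore by its supremum.
*)

theory Submission
  imports Defs
begin

section \<open>Substitution\<close>

fun occ :: "nat \<Rightarrow> trm \<Rightarrow> nat" where
  "occ k (Var i) = (if i = k then 1 else 0)"
| "occ k (Lam M) = occ (Suc k) M"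
| "occ k (App M N) = occ k M + occ k N"
| "occ k (Choice M N) = occ k M + occ k N"

lemma subst_shift_same: "subst (shift k M) k V = M"
  by (induction M arbitrary: k V) auto

lemma shift_shift: "j \<le> i \<Longrightarrow> shift j (shift i M) = shift (Suc i) (shift j M)"
  by (induction M arbitrary: i j) auto

lemma shift_subst_above: "k \<le> j \<Longrightarrow> shift j (subst M k V) = subst (shift (Suc j) M) k (shift j V)"
  by (induction M arbitrary: k j V) (auto simp: shift_shift)

lemma shift_subst_below: "j \<le> k \<Longrightarrow> shift j (subst M k V) = subst (shift j M) (Suc k) (shift j V)"
  by (induction M arbitrary: k j V) (auto simp: shift_shift)

lemma subst_subst:
  "i \<le> k \<Longrightarrow> subst (subst M i W) k V = subst (subst M (Suc k) (shift i V)) i (subst W k V)"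
  by (induction M arbitrary: i k W V) (auto simp: subst_shift_same shift_shift shift_subst_below)

lemma is_value_shift [simp]: "is_value (shift c V) = is_value V"
  by (cases V) auto

lemma is_value_subst: "is_value V \<Longrightarrow> is_value W \<Longrightarrow> is_value (subst V k W)"
  by (cases V) auto

lemma occ_shift_below: "i < j \<Longrightarrow> occ i (shift j M) = occ i M"
  by (induction M arbitrary: i j) auto

lemma occ_shift_above: "c \<le> i \<Longrightarrow> occ (Suc i) (shift c M) = occ i M"
  by (induction M arbitrary: i c) auto

lemma occ_shift_same: "occ c (shift c M) = 0"
  by (induction M arbitrary: c) auto

lemma occ_subst_above: "j \<le> k \<Longrightarrow> occ j V = 0 \<Longrightarrow> occ j (subst M (Suc k) V) = occ j M"
  by (induction M arbitrary: j k V) (auto simp: occ_shift_above)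

lemma occ_subst: "i \<le> k \<Longrightarrow> occ k (subst M i W) = occ (Suc k) M + occ i M * occ k W"
  by (induction M arbitrary: i k W) (auto simp: occ_shift_above algebra_simps)

section \<open>Parallel reduction\<close>

text \<open>The index bounds the number of weak \<open>\<beta>\<^sub>v\<close>-steps needed to develop the contracted redexes:
  a redex costs one step, plus the cost of its body, plus the cost of its argument once for every
  occurrence of the bound variable in the developed body.\<close>
inductive spar :: "nat \<Rightarrow> trm \<Rightarrow> trm \<Rightarrow> bool" where
  var: "spar n (Var i) (Var i)"
| lam: "spar n P P' \<Longrightarrow> spar n (Lam P) (Lam P')"
| app: "spar a M M' \<Longrightarrow> spar b N N' \<Longrightarrow> a + b \<le> n \<Longrightarrow> spar n (App M N) (App M' N')"
| choice: "spar a M M' \<Longrightarrow> spar b N N' \<Longrightarrow> a + b \<le> n \<Longrightarrow> spar n (Choice M N) (Choice M' N')"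
| beta: "spar a P P' \<Longrightarrow> spar b V V' \<Longrightarrow> is_value V \<Longrightarrow> a + occ 0 P' * b + 1 \<le> n \<Longrightarrow>
     spar n (App (Lam P) V) (subst P' 0 V')"

definition par :: "trm \<Rightarrow> trm \<Rightarrow> bool" where
  "par M N \<longleftrightarrow> (\<exists>n. spar n M N)"

lemma spar_mono: "spar n M N \<Longrightarrow> n \<le> n' \<Longrightarrow> spar n' M N"
proof (induction arbitrary: n' rule: spar.induct)
  case (app a M M' b N N' n)
  then show ?case by (intro spar.app[of a M M' b N N']) auto
next
  case (choice a M M' b N N' n)
  then show ?case by (intro spar.choice[of a M M' b N N']) auto
next
  case (beta a P P' b V V' n)
  then show ?case by (intro spar.beta[of a P P' b V V']) auto
qed (auto intro: spar.intros)

lemma spar_refl: "spar n M M"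
  by (induction M arbitrary: n) (auto intro: spar.intros spar.app[of 0 _ _ 0] spar.choice[of 0 _ _ 0])

lemma par_refl: "par M M"
  unfolding par_def using spar_refl by blast

lemma par_Lam: "par M M' \<Longrightarrow> par (Lam M) (Lam M')"
  unfolding par_def by (auto intro: spar.lam)

lemma par_App: "par M M' \<Longrightarrow> par N N' \<Longrightarrow> par (App M N) (App M' N')"
  unfolding par_def by (auto intro: spar.app)

lemma par_Choice: "par M M' \<Longrightarrow> par N N' \<Longrightarrow> par (Choice M N) (Choice M' N')"
  unfolding par_def by (auto intro: spar.choice)

lemma beta_full_par: "beta_full M M' \<Longrightarrow> par M M'"
proof (induction rule: beta_full.induct)
  case (root V M)
  have "spar 1 (App (Lam M) V) (subst M 0 V)"
    by (rule spar.beta[OF spar_refl[of 0] spar_refl[of 0] root]) simp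
  then show ?case unfolding par_def by blast
qed (auto intro: par_App par_Lam par_Choice par_refl)

lemma spar_shift: "spar n M N \<Longrightarrow> spar n (shift c M) (shift c N)"
proof (induction arbitrary: c rule: spar.induct)
  case (beta a P P' b V V' n)
  have "occ 0 (shift (Suc c) P') = occ 0 P'"
    by (simp add: occ_shift_below)
  then have "spar n (App (Lam (shift (Suc c) P)) (shift c V)) (subst (shift (Suc c) P') 0 (shift c V'))"
    using beta by (intro spar.beta) auto
  then show ?case
    by (simp add: shift_subst_above)
qed (auto intro: spar.intros)

lemma spar_subst:
  "spar n M M' \<Longrightarrow> spar m V V' \<Longrightarrow> is_value V \<Longrightarrow>
   spar (n + occ k M' * m) (subst M k V) (subst M' k V')"
proof (induction arbitrary: k V V' m rule: spar.induct)
  case (var n i)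
  then show ?case by (auto intro: spar.intros spar_mono)
next
  case (lam n P P')
  then have "spar (n + occ (Suc k) P' * m) (subst P (Suc k) (shift 0 V)) (subst P' (Suc k) (shift 0 V'))"
    by (simp add: spar_shift)
  then show ?case by (simp add: spar.lam)
next
  case (app a M M' b N N' n)
  then have "spar (a + occ k M' * m) (subst M k V) (subst M' k V')"
    "spar (b + occ k N' * m) (subst N k V) (subst N' k V')"
    "a + occ k M' * m + (b + occ k N' * m) \<le> n + occ k (App M' N') * m"
    by (auto simp: algebra_simps)
  then show ?case by (simp add: spar.app)
next
  case (choice a M M' b N N' n)
  then have "spar (a + occ k M' * m) (subst M k V) (subst M' k V')"
    "spar (b + occ k N' * m) (subst N k V) (subst N' k V')"
    "a + occ k M' * m + (b + occ k N' * m) \<le> n + occ k (Choice M' N') * m"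
    by (auto simp: algebra_simps)
  then show ?case by (simp add: spar.choice)
next
  case (beta a P P' b W W' n)
  have body: "spar (a + occ (Suc k) P' * m) (subst P (Suc k) (shift 0 V)) (subst P' (Suc k) (shift 0 V'))"
    using beta by (simp add: spar_shift)
  have arg: "spar (b + occ k W' * m) (subst W k V) (subst W' k V')"
    using beta by blast
  have "occ 0 (subst P' (Suc k) (shift 0 V')) = occ 0 P'"
    by (simp add: occ_subst_above occ_shift_same)
  moreover have "occ k (subst P' 0 W') = occ (Suc k) P' + occ 0 P' * occ k W'"
    by (simp add: occ_subst)
  ultimately have "(a + occ (Suc k) P' * m) + occ 0 (subst P' (Suc k) (shift 0 V')) * (b + occ k W' * m) + 1
      \<le> n + occ k (subst P' 0 W') * m"
    using beta.hyps(4) by (simp add: algebra_simps)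
  from spar.beta[OF body arg _ this] beta.prems beta.hyps(3)
  show ?case
    by (simp add: is_value_subst subst_subst[of 0 k P' W' V'])
qed

lemma par_subst: "par M M' \<Longrightarrow> par V V' \<Longrightarrow> is_value V \<Longrightarrow> par (subst M k V) (subst M' k V')"
  unfolding par_def using spar_subst by blast

text \<open>Internal parallel reduction: parallel reduction that contracts no redex in weak position.\<close>
inductive ipar :: "trm \<Rightarrow> trm \<Rightarrow> bool" where
  var: "ipar (Var i) (Var i)"
| lam: "par P P' \<Longrightarrow> ipar (Lam P) (Lam P')"
| app: "ipar M M' \<Longrightarrow> ipar N N' \<Longrightarrow> ipar (App M N) (App M' N')"
| choice: "par M M' \<Longrightarrow> par N N' \<Longrightarrow> ipar (Choice M N) (Choice M' N')"

inductive_cases ipar_VarE: "ipar M (Var i)"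
inductive_cases ipar_LamE: "ipar M (Lam P')"
inductive_cases ipar_AppE: "ipar M (App P' Q')"
inductive_cases ipar_ChoiceE: "ipar M (Choice P' Q')"

lemma ipar_par: "ipar M N \<Longrightarrow> par M N"
  by (induction rule: ipar.induct) (auto intro: par_refl par_Lam par_App par_Choice)

lemma ipar_is_value: "ipar M N \<Longrightarrow> is_value M \<longleftrightarrow> is_value N"
  by (auto elim: ipar.cases)

lemma beta_weak_App_left: "beta_weak\<^sup>*\<^sup>* M M' \<Longrightarrow> beta_weak\<^sup>*\<^sup>* (App M N) (App M' N)"
  by (induction rule: rtranclp_induct) (auto intro: rtranclp.rtrancl_into_rtrancl beta_weak.appL)

lemma beta_weak_App_right: "beta_weak\<^sup>*\<^sup>* N N' \<Longrightarrow> beta_weak\<^sup>*\<^sup>* (App M N) (App M N')"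
  by (induction rule: rtranclp_induct) (auto intro: rtranclp.rtrancl_into_rtrancl beta_weak.appR)

text \<open>The factorisation runs by induction on the size: by \<open>spar_subst\<close>, firing a weak redex
  first leaves a parallel reduction of strictly smaller size.\<close>
lemma spar_factorise: "spar n M N \<Longrightarrow> \<exists>M1. beta_weak\<^sup>*\<^sup>* M M1 \<and> ipar M1 N"
proof (induction n arbitrary: M N rule: less_induct)
  case (less n)
  have "spar n' M N \<Longrightarrow> n' \<le> n \<Longrightarrow> \<exists>M1. beta_weak\<^sup>*\<^sup>* M M1 \<and> ipar M1 N" for n' M N
  proof (induction rule: spar.induct)
    case (app a M M' b N N' n')
    then obtain M1 N1 where "beta_weak\<^sup>*\<^sup>* M M1" "ipar M1 M'" "beta_weak\<^sup>*\<^sup>* N N1" "ipar N1 N'"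
      by auto
    then show ?case
      by (meson beta_weak_App_left beta_weak_App_right rtranclp_trans ipar.app)
  next
    case (beta a P P' b V V' n')
    have "spar (a + occ 0 P' * b) (subst P 0 V) (subst P' 0 V')" "a + occ 0 P' * b < n"
      using spar_subst[OF beta.hyps(1-3)] beta.prems beta.hyps(4) by auto
    with less.IH obtain M1 where "beta_weak\<^sup>*\<^sup>* (subst P 0 V) M1" "ipar M1 (subst P' 0 V')"
      by blast
    moreover have "beta_weak (App (Lam P) V) (subst P 0 V)"
      using beta.hyps(3) by (rule beta_weak.root)
    ultimately show ?case
      by (meson converse_rtranclp_into_rtranclp)
  next
    case (lam n' P P')
    have "ipar (Lam P) (Lam P')" using lam.hyps by (intro ipar.lam) (auto simp: par_def)
    then show ?case by blast
  next
    case (choice a M M' b N N' n')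
    have "ipar (Choice M N) (Choice M' N')" using choice.hyps by (intro ipar.choice) (auto simp: par_def)
    then show ?case by blast
  qed (auto intro: ipar.intros)
  then show ?case using less.prems by blast
qed

lemma par_factorise: "par M N \<Longrightarrow> \<exists>M1. beta_weak\<^sup>*\<^sup>* M M1 \<and> ipar M1 N"
  unfolding par_def using spar_factorise by blast

lemma beta_weak_ipar_postpone: "beta_weak N N' \<Longrightarrow> ipar M N \<Longrightarrow> \<exists>M'. beta_weak M M' \<and> par M' N'"
proof (induction arbitrary: M rule: beta_weak.induct)
  case (root V' P')
  then obtain P V where M: "M = App (Lam P) V" "par P P'" "ipar V V'" "is_value V"
    using ipar_is_value by (auto elim!: ipar_AppE ipar_LamE)
  then have "par (subst P 0 V) (subst P' 0 V')"
    by (simp add: ipar_par par_subst)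
  moreover have "beta_weak M (subst P 0 V)"
    using M by (simp add: beta_weak.root)
  ultimately show ?case by blast
next
  case (appL N N' Q')
  then obtain P Q where M: "M = App P Q" "ipar P N" "ipar Q Q'" by (auto elim: ipar_AppE)
  with appL.IH obtain P' where "beta_weak P P'" "par P' N'" by blast
  with M show ?case by (auto intro: beta_weak.appL par_App ipar_par)
next
  case (appR N N' P')
  then obtain P Q where M: "M = App P Q" "ipar P P'" "ipar Q N" by (auto elim: ipar_AppE)
  with appR.IH obtain Q' where "beta_weak Q Q'" "par Q' N'" by blast
  with M show ?case by (auto intro: beta_weak.appR par_App ipar_par)
qed

lemma ipar_beta_weak_reflect: "beta_weak M M' \<Longrightarrow> ipar M N \<Longrightarrow> \<exists>N'. beta_weak N N'"
proof (induction arbitrary: N rule: beta_weak.induct)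
  case (root V M)
  then show ?case
    using ipar_is_value by (auto elim!: ipar.cases[of "App _ _"] ipar.cases[of "Lam _"] intro: beta_weak.root)
qed (auto elim!: ipar.cases[of "App _ _"] intro: beta_weak.appL beta_weak.appR)

lemma ipar_oplus_step_reflect: "oplus_step M m \<Longrightarrow> ipar M N \<Longrightarrow> \<exists>n. oplus_step N n"
  by (induction arbitrary: N rule: oplus_step.induct)
    (auto elim!: ipar.cases[of "App _ _"] ipar.cases[of "Choice _ _"] intro: oplus_step.intros)

lemma ipar_weak_normal: "ipar M N \<Longrightarrow> weak_normal N \<Longrightarrow> weak_normal M"
  unfolding weak_normal_def using ipar_beta_weak_reflect by blast

lemma ipar_surface_normal: "ipar M N \<Longrightarrow> surface_normal N \<Longrightarrow> surface_normal M"
  unfolding surface_normal_def surface_step_def using ipar_beta_weak_reflect ipar_oplus_step_reflect by blast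

section \<open>Weak normal forms and the unbiased iteration\<close>

definition is_Lam :: "trm \<Rightarrow> bool" where
  "is_Lam M \<longleftrightarrow> (\<exists>P. M = Lam P)"

lemma weak_normal_Lam [simp]: "weak_normal (Lam P)"
  and weak_normal_Choice [simp]: "weak_normal (Choice P Q)"
  unfolding weak_normal_def by (auto elim: beta_weak.cases)

lemmas U_step_Lam = U_step.lam[OF weak_normal_Lam]
  and U_step_Choice_left = U_step.choiceL[OF weak_normal_Choice]
  and U_step_Choice_right = U_step.choiceR[OF weak_normal_Choice]

lemma weak_normal_App:
  "weak_normal (App P Q) \<longleftrightarrow> weak_normal P \<and> weak_normal Q \<and> \<not> (is_Lam P \<and> is_value Q)"
  unfolding weak_normal_def is_Lam_def by (auto elim: beta_weak.cases intro: beta_weak.intros)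

lemma U_step_preserves_shape:
  "U_step P P' \<Longrightarrow> weak_normal P \<Longrightarrow>
   weak_normal P' \<and> (is_value P' \<longleftrightarrow> is_value P) \<and> (is_Lam P' \<longleftrightarrow> is_Lam P)"
proof (induction rule: U_step.induct)
  case (weak M M')
  then show ?case unfolding weak_normal_def by blast
qed (auto simp: weak_normal_App is_Lam_def)

lemma U_step_App_left_weak_normal:
  "U_step P P' \<Longrightarrow> weak_normal (App P Q) \<Longrightarrow> weak_normal (App P' Q)"
  using U_step_preserves_shape by (auto simp: weak_normal_App)

lemma U_step_App_right_weak_normal:
  "U_step Q Q' \<Longrightarrow> weak_normal (App P Q) \<Longrightarrow> weak_normal (App P Q')"
  using U_step_preserves_shape by (auto simp: weak_normal_App)

lemma U_steps_App_left:
  "U_step\<^sup>*\<^sup>* P P' \<Longrightarrow> weak_normal (App P Q) \<Longrightarrow>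
   U_step\<^sup>*\<^sup>* (App P Q) (App P' Q) \<and> weak_normal (App P' Q)"
  by (induction rule: rtranclp_induct)
    (auto intro: rtranclp.rtrancl_into_rtrancl U_step.appL U_step_App_left_weak_normal)

lemma U_steps_App_right:
  "U_step\<^sup>*\<^sup>* Q Q' \<Longrightarrow> weak_normal (App P Q) \<Longrightarrow>
   U_step\<^sup>*\<^sup>* (App P Q) (App P Q') \<and> weak_normal (App P Q')"
  by (induction rule: rtranclp_induct)
    (auto intro: rtranclp.rtrancl_into_rtrancl U_step.appR U_step_App_right_weak_normal)

lemma U_steps_Lam: "U_step\<^sup>*\<^sup>* P P' \<Longrightarrow> U_step\<^sup>*\<^sup>* (Lam P) (Lam P')"
  by (induction rule: rtranclp_induct) (auto intro: rtranclp.rtrancl_into_rtrancl U_step_Lam)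

lemma U_steps_Choice_left: "U_step\<^sup>*\<^sup>* P P' \<Longrightarrow> U_step\<^sup>*\<^sup>* (Choice P Q) (Choice P' Q)"
  by (induction rule: rtranclp_induct) (auto intro: rtranclp.rtrancl_into_rtrancl U_step_Choice_left)

lemma U_steps_Choice_right: "U_step\<^sup>*\<^sup>* Q Q' \<Longrightarrow> U_step\<^sup>*\<^sup>* (Choice P Q) (Choice P Q')"
  by (induction rule: rtranclp_induct) (auto intro: rtranclp.rtrancl_into_rtrancl U_step_Choice_right)

lemma beta_weak_steps_U_steps: "beta_weak\<^sup>*\<^sup>* M M' \<Longrightarrow> U_step\<^sup>*\<^sup>* M M'"
  by (induction rule: rtranclp_induct) (auto intro: rtranclp.rtrancl_into_rtrancl U_step.weak)

lemma par_U_step_postpone: "U_step N N' \<Longrightarrow> par M N \<Longrightarrow> \<exists>M'. U_step\<^sup>*\<^sup>* M M' \<and> par M' N'"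
proof (induction arbitrary: M rule: U_step.induct)
  case (weak N N')
  obtain M1 M' where "beta_weak\<^sup>*\<^sup>* M M1" "beta_weak M1 M'" "par M' N'"
    using par_factorise[OF weak.prems] beta_weak_ipar_postpone[OF weak.hyps] by blast
  then show ?case
    by (meson beta_weak_steps_U_steps rtranclp.rtrancl_into_rtrancl U_step.weak)
next
  case (lam P P')
  then obtain M1 P1 P2 where "beta_weak\<^sup>*\<^sup>* M (Lam P1)" "U_step\<^sup>*\<^sup>* P1 P2" "par P2 P'"
    using par_factorise by (blast elim: ipar_LamE)
  then show ?case
    by (meson beta_weak_steps_U_steps U_steps_Lam par_Lam rtranclp_trans)
next
  case (appL P Q P')
  then obtain P1 Q1 where M1: "beta_weak\<^sup>*\<^sup>* M (App P1 Q1)" "ipar P1 P" "ipar Q1 Q"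
    and wn: "weak_normal (App P1 Q1)"
    using par_factorise ipar_weak_normal ipar.app by (metis ipar_AppE)
  with appL.IH obtain P2 where "U_step\<^sup>*\<^sup>* P1 P2" "par P2 P'" by (blast dest: ipar_par)
  with M1 wn show ?case
    by (meson U_steps_App_left beta_weak_steps_U_steps ipar_par par_App rtranclp_trans)
next
  case (appR P Q Q')
  then obtain P1 Q1 where M1: "beta_weak\<^sup>*\<^sup>* M (App P1 Q1)" "ipar P1 P" "ipar Q1 Q"
    and wn: "weak_normal (App P1 Q1)"
    using par_factorise ipar_weak_normal ipar.app by (metis ipar_AppE)
  with appR.IH obtain Q2 where "U_step\<^sup>*\<^sup>* Q1 Q2" "par Q2 Q'" by (blast dest: ipar_par)
  with M1 wn show ?case
    by (meson U_steps_App_right beta_weak_steps_U_steps ipar_par par_App rtranclp_trans)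
next
  case (choiceL P Q P')
  then obtain P1 Q1 P2 where "beta_weak\<^sup>*\<^sup>* M (Choice P1 Q1)" "par Q1 Q" "U_step\<^sup>*\<^sup>* P1 P2" "par P2 P'"
    using par_factorise by (blast elim: ipar_ChoiceE)
  then show ?case
    by (meson U_steps_Choice_left beta_weak_steps_U_steps par_Choice rtranclp_trans)
next
  case (choiceR P Q Q')
  then obtain P1 Q1 Q2 where "beta_weak\<^sup>*\<^sup>* M (Choice P1 Q1)" "par P1 P" "U_step\<^sup>*\<^sup>* Q1 Q2" "par Q2 Q'"
    using par_factorise by (blast elim: ipar_ChoiceE)
  then show ?case
    by (meson U_steps_Choice_right beta_weak_steps_U_steps par_Choice rtranclp_trans)
qed

definition beta_normal :: "trm \<Rightarrow> bool" where
  "beta_normal M \<longleftrightarrow> \<not> (\<exists>M'. beta_full M M')"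

lemma beta_normal_Lam: "beta_normal (Lam P) \<Longrightarrow> beta_normal P"
  and beta_normal_App: "beta_normal (App P Q) \<Longrightarrow> beta_normal P \<and> beta_normal Q"
  and beta_normal_Choice: "beta_normal (Choice P Q) \<Longrightarrow> beta_normal P \<and> beta_normal Q"
  unfolding beta_normal_def by (auto intro: beta_full.intros)

lemma beta_weak_beta_full: "beta_weak M M' \<Longrightarrow> beta_full M M'"
  by (induction rule: beta_weak.induct) (auto intro: beta_full.intros)

lemma U_step_beta_full: "U_step M M' \<Longrightarrow> beta_full M M'"
  by (induction rule: U_step.induct) (auto intro: beta_full.intros beta_weak_beta_full)

lemma beta_normal_weak_normal: "beta_normal M \<Longrightarrow> weak_normal M"
  unfolding beta_normal_def weak_normal_def using beta_weak_beta_full by blast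

lemma beta_full_U_step: "beta_full M M' \<Longrightarrow> \<exists>M''. U_step M M''"
proof (induction rule: beta_full.induct)
  case (root V M)
  then show ?case by (auto intro: U_step.weak beta_weak.root)
next
  case (appL M M' N)
  then show ?case by (metis U_step.appL U_step.weak weak_normal_def)
next
  case (appR N N' M)
  then show ?case by (metis U_step.appR U_step.weak weak_normal_def)
qed (auto intro: U_step_Lam U_step_Choice_left U_step_Choice_right)

lemma spar_beta_normal_eq: "spar n M N \<Longrightarrow> beta_normal M \<Longrightarrow> N = M"
proof (induction rule: spar.induct)
  case (beta a P P' b V V' n)
  then show ?case unfolding beta_normal_def by (auto intro: beta_full.root)
qed (auto dest: beta_normal_App beta_normal_Lam beta_normal_Choice)

lemma par_beta_normal_eq: "par M N \<Longrightarrow> beta_normal M \<Longrightarrow> N = M"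
  unfolding par_def using spar_beta_normal_eq by blast

lemma par_beta_normal_U_steps: "par M N \<Longrightarrow> beta_normal N \<Longrightarrow> U_step\<^sup>*\<^sup>* M N"
proof (induction N arbitrary: M)
  case (Var i)
  then show ?case
    using par_factorise by (metis beta_weak_steps_U_steps ipar_VarE)
next
  case (Lam P)
  then obtain P1 where "beta_weak\<^sup>*\<^sup>* M (Lam P1)" "U_step\<^sup>*\<^sup>* P1 P"
    using par_factorise beta_normal_Lam by (blast elim: ipar_LamE)
  then show ?case
    by (meson beta_weak_steps_U_steps U_steps_Lam rtranclp_trans)
next
  case (App P Q)
  then obtain P1 Q1 where M1: "beta_weak\<^sup>*\<^sup>* M (App P1 Q1)" "ipar P1 P" "ipar Q1 Q"
    using par_factorise by (blast elim: ipar_AppE)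
  have "weak_normal (App P1 Q1)"
    using M1 App.prems(2) by (blast intro: ipar_weak_normal ipar.app beta_normal_weak_normal)
  moreover have "U_step\<^sup>*\<^sup>* P1 P" "U_step\<^sup>*\<^sup>* Q1 Q"
    using App M1 by (auto dest: ipar_par beta_normal_App)
  ultimately have "U_step\<^sup>*\<^sup>* (App P1 Q1) (App P Q)"
    by (meson U_steps_App_left U_steps_App_right rtranclp_trans)
  with M1 show ?case
    by (meson beta_weak_steps_U_steps rtranclp_trans)
next
  case (Choice P Q)
  then obtain P1 Q1 where "beta_weak\<^sup>*\<^sup>* M (Choice P1 Q1)" "U_step\<^sup>*\<^sup>* P1 P" "U_step\<^sup>*\<^sup>* Q1 Q"
    using par_factorise beta_normal_Choice by (blast elim: ipar_ChoiceE)
  then show ?case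
    by (meson U_steps_Choice_left U_steps_Choice_right beta_weak_steps_U_steps rtranclp_trans)
qed

lemma beta_weak_not_value: "beta_weak M M' \<Longrightarrow> \<not> is_value M"
  by (cases rule: beta_weak.cases) auto

inductive_cases beta_weak_AppE: "beta_weak (App M N) M'"

lemma beta_weak_diamond:
  "beta_weak M A \<Longrightarrow> beta_weak M B \<Longrightarrow> A \<noteq> B \<Longrightarrow> \<exists>C. beta_weak A C \<and> beta_weak B C"
proof (induction arbitrary: B rule: beta_weak.induct)
  case (root V P)
  from root.prems(1) show ?case
    by (cases rule: beta_weak_AppE) (use root in \<open>auto dest: beta_weak_not_value\<close>)
next
  case (appL M M' N)
  from appL.prems(1) show ?case
    by (cases rule: beta_weak_AppE)
      (use appL in \<open>auto dest: beta_weak_not_value intro: beta_weak.appL beta_weak.appR\<close>)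
next
  case (appR N N' M)
  from appR.prems(1) show ?case
    by (cases rule: beta_weak_AppE)
      (use appR in \<open>auto dest: beta_weak_not_value intro: beta_weak.appL beta_weak.appR\<close>)
qed

inductive_cases U_step_LamE: "U_step (Lam M) A"
inductive_cases U_step_ChoiceE: "U_step (Choice M N) A"

lemma U_step_App_cases:
  assumes "U_step (App P Q) B"
  obtains "beta_weak (App P Q) B"
  | P' where "weak_normal (App P Q)" "U_step P P'" "B = App P' Q"
  | Q' where "weak_normal (App P Q)" "U_step Q Q'" "B = App P Q'"
  using assms by (cases rule: U_step.cases) auto

lemma U_step_App_commute:
  "weak_normal (App P Q) \<Longrightarrow> U_step P P' \<Longrightarrow> U_step Q Q' \<Longrightarrow>
   U_step (App P' Q) (App P' Q') \<and> U_step (App P Q') (App P' Q')"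
  by (blast intro: U_step.appL U_step.appR U_step_App_left_weak_normal U_step_App_right_weak_normal)

lemma U_step_diamond: "U_step M A \<Longrightarrow> U_step M B \<Longrightarrow> A \<noteq> B \<Longrightarrow> \<exists>C. U_step A C \<and> U_step B C"
proof (induction arbitrary: B rule: U_step.induct)
  case (weak M M')
  from weak.prems(1) show ?case
  proof (cases rule: U_step.cases)
    case weak
    then show ?thesis using beta_weak_diamond \<open>beta_weak M M'\<close> \<open>M' \<noteq> B\<close> by (meson U_step.weak)
  qed (use weak.hyps in \<open>auto simp: weak_normal_def\<close>)
next
  case (lam P P')
  from lam.prems(1) show ?case
    by (cases rule: U_step_LamE) (use lam in \<open>auto elim: beta_weak.cases intro: U_step_Lam\<close>)
next
  case (appL P Q P')
  from appL.prems(1) show ?case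
  proof (cases rule: U_step_App_cases)
    case (2 P'')
    with appL.IH appL.prems(2) obtain C where "U_step P' C" "U_step P'' C" by auto
    with appL.hyps 2 show ?thesis
      by (auto intro: U_step.appL U_step_App_left_weak_normal)
  next
    case (3 Q')
    with appL.hyps show ?thesis using U_step_App_commute by blast
  qed (use appL.hyps in \<open>auto simp: weak_normal_def\<close>)
next
  case (appR P Q Q')
  from appR.prems(1) show ?case
  proof (cases rule: U_step_App_cases)
    case (2 P')
    with appR.hyps show ?thesis using U_step_App_commute by blast
  next
    case (3 Q'')
    with appR.IH appR.prems(2) obtain C where "U_step Q' C" "U_step Q'' C" by auto
    with appR.hyps 3 show ?thesis
      by (auto intro: U_step.appR U_step_App_right_weak_normal)
  qed (use appR.hyps in \<open>auto simp: weak_normal_def\<close>)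
next
  case (choiceL P Q P')
  from choiceL.prems(1) show ?case
    by (cases rule: U_step_ChoiceE)
      (use choiceL in \<open>auto elim: beta_weak.cases intro: U_step_Choice_left U_step_Choice_right\<close>)
next
  case (choiceR P Q Q')
  from choiceR.prems(1) show ?case
    by (cases rule: U_step_ChoiceE)
      (use choiceR in \<open>auto elim: beta_weak.cases intro: U_step_Choice_left U_step_Choice_right\<close>)
qed

lemma scale_empty [simp]: "scale p {#} = {#}"
  and scale_add [simp]: "scale p (a + b) = scale p a + scale p b"
  and scale_add_mset [simp]: "scale p (add_mset x a) = add_mset (p * fst x, snd x) (scale p a)"
  and scale_dirac [simp]: "scale p (dirac M) = {#(p, M)#}"
  unfolding scale_def dirac_def by (simp_all add: case_prod_beta)

lemma scale_scale [simp]: "scale p (scale q a) = scale (p * q) a"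
  by (induction a) auto

lemma scale_one [simp]: "scale 1 a = a"
  by (induction a) auto

lemma map_trm_empty [simp]: "map_trm f {#} = {#}"
  and map_trm_add [simp]: "map_trm f (a + b) = map_trm f a + map_trm f b"
  and map_trm_add_mset [simp]: "map_trm f (add_mset x a) = add_mset (fst x, f (snd x)) (map_trm f a)"
  and map_trm_dirac [simp]: "map_trm f (dirac M) = dirac (f M)"
  unfolding map_trm_def dirac_def by (simp_all add: case_prod_beta)

lemma map_trm_scale [simp]: "map_trm f (scale p a) = scale p (map_trm f a)"
  by (induction a) auto

lemma obs_Nnf_empty [simp]: "obs_Nnf {#} N = 0"
  and obs_Nnf_add [simp]: "obs_Nnf (a + b) N = obs_Nnf a N + obs_Nnf b N"
  and obs_Nnf_add_mset [simp]:
    "obs_Nnf (add_mset x a) N = (if normal N \<and> snd x = N then fst x else 0) + obs_Nnf a N"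
  unfolding obs_Nnf_def by simp_all

lemma obs_Nnf_scale [simp]: "obs_Nnf (scale p a) N = p * obs_Nnf a N"
  by (induction a) (auto simp: algebra_simps)

lemma obs_Nnf_dirac: "obs_Nnf (dirac M) N = (if normal N \<and> M = N then 1 else 0)"
  unfolding dirac_def by simp

lemma obs_Nnf_eq_0: "(\<And>x. x \<in># a \<Longrightarrow> \<not> normal (snd x)) \<Longrightarrow> obs_Nnf a N = 0"
  by (induction a) auto

definition mass :: "mdist \<Rightarrow> real" where
  "mass m = sum_mset (image_mset fst m)"

definition nonneg :: "mdist \<Rightarrow> bool" where
  "nonneg m \<longleftrightarrow> (\<forall>x\<in>#m. 0 \<le> fst x)"

lemma mass_empty [simp]: "mass {#} = 0"
  and mass_add [simp]: "mass (a + b) = mass a + mass b"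
  and mass_add_mset [simp]: "mass (add_mset x a) = fst x + mass a"
  and mass_dirac [simp]: "mass (dirac M) = 1"
  unfolding mass_def dirac_def by simp_all

lemma mass_scale [simp]: "mass (scale p a) = p * mass a"
  by (induction a) (auto simp: algebra_simps)

lemma mass_map_trm [simp]: "mass (map_trm f a) = mass a"
  by (induction a) auto

lemma nonneg_empty [simp]: "nonneg {#}"
  and nonneg_add [simp]: "nonneg (a + b) \<longleftrightarrow> nonneg a \<and> nonneg b"
  and nonneg_add_mset [simp]: "nonneg (add_mset x a) \<longleftrightarrow> 0 \<le> fst x \<and> nonneg a"
  and nonneg_dirac [simp]: "nonneg (dirac M)"
  and nonneg_map_trm [simp]: "nonneg (map_trm f a) \<longleftrightarrow> nonneg a"
  unfolding nonneg_def dirac_def map_trm_def by auto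

lemma nonneg_scale: "0 \<le> p \<Longrightarrow> nonneg a \<Longrightarrow> nonneg (scale p a)"
  by (induction a) auto

lemma obs_Nnf_nonneg: "nonneg a \<Longrightarrow> 0 \<le> obs_Nnf a N"
  by (induction a) auto

lemma obs_Nnf_le_mass: "nonneg a \<Longrightarrow> obs_Nnf a N \<le> mass a"
  by (induction a) auto

section \<open>Liftings and couplings\<close>

inductive mlift :: "(trm \<Rightarrow> mdist \<Rightarrow> bool) \<Rightarrow> mdist \<Rightarrow> mdist \<Rightarrow> bool" for b where
  empty: "mlift b {#} {#}"
| add: "b M n \<Longrightarrow> mlift b m x \<Longrightarrow> mlift b (add_mset (p, M) m) (scale p n + x)"

lemma mlift_add: "mlift b m1 x1 \<Longrightarrow> mlift b m2 x2 \<Longrightarrow> mlift b (m1 + m2) (x1 + x2)"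
  by (induction rule: mlift.induct) (auto simp: add.assoc intro: mlift.add)

lemma mlift_scale: "mlift b m x \<Longrightarrow> mlift b (scale q m) (scale q x)"
proof (induction rule: mlift.induct)
  case (add M n m x p)
  then show ?case using mlift.add[of b M n "scale q m" "scale q x" "q * p"] by simp
qed (simp add: mlift.empty)

lemma mlift_mono: "mlift b m x \<Longrightarrow> (\<And>M n. b M n \<Longrightarrow> b' M n) \<Longrightarrow> mlift b' m x"
  by (induction rule: mlift.induct) (auto intro: mlift.intros)

lemma mlift_refl: "(\<And>M. b M (dirac M)) \<Longrightarrow> mlift b m m"
proof (induction m)
  case (add x m)
  then show ?case using mlift.add[of b "snd x" "dirac (snd x)" m m "fst x"] by simp
qed (simp add: mlift.empty)

lemma mlift_remove:
  "mlift b m x \<Longrightarrow> a \<in># m \<Longrightarrow> \<exists>n x'. b (snd a) n \<and> mlift b (m - {#a#}) x' \<and> x = scale (fst a) n + x'"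
proof (induction rule: mlift.induct)
  case (add M n m x p)
  show ?case
  proof (cases "a = (p, M)")
    case False
    with add obtain n' x' where "b (snd a) n'" "mlift b (m - {#a#}) x'" "x = scale (fst a) n' + x'"
      by auto
    moreover have "add_mset (p, M) m - {#a#} = add_mset (p, M) (m - {#a#})"
      using False by (simp add: diff_add_mset_swap add.prems)
    moreover have "mlift b (add_mset (p, M) (m - {#a#})) (scale p n + x')"
      using add.hyps(1) \<open>mlift b (m - {#a#}) x'\<close> by (rule mlift.add)
    moreover have "scale p n + x = scale (fst a) n' + (scale p n + x')"
      using \<open>x = scale (fst a) n' + x'\<close> by (simp add: ac_simps)
    ultimately show ?thesis by auto
  qed (use add in auto)
qed simp

lemma mlift_add_msetE:
  assumes "mlift b (add_mset (p, M) m) x"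
  obtains n x' where "b M n" "mlift b m x'" "x = scale p n + x'"
  using mlift_remove[OF assms, of "(p, M)"] by auto

lemma mlift_dirac_iff: "mlift b (dirac M) n \<longleftrightarrow> b M n"
proof
  assume "mlift b (dirac M) n"
  then obtain n' x' where "b M n'" "mlift b {#} x'" "n = scale 1 n' + x'"
    unfolding dirac_def by (rule mlift_add_msetE)
  moreover from \<open>mlift b {#} x'\<close> have "x' = {#}"
    by (cases rule: mlift.cases) auto
  ultimately show "b M n" by simp
next
  assume "b M n"
  then show "mlift b (dirac M) n"
    using mlift.add[OF _ mlift.empty, of b M n 1] by (simp add: dirac_def)
qed

lemma mlift_map_trm:
  "mlift b m x \<Longrightarrow> (\<And>M n. b M n \<Longrightarrow> b (f M) (map_trm f n)) \<Longrightarrow> mlift b (map_trm f m) (map_trm f x)"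
  by (induction rule: mlift.induct) (auto intro: mlift.intros)

lemma mlift_nonneg: "mlift b m x \<Longrightarrow> nonneg m \<Longrightarrow> (\<And>M n. b M n \<Longrightarrow> nonneg n) \<Longrightarrow> nonneg x"
  by (induction rule: mlift.induct) (auto intro: nonneg_scale)

lemma mlift_mass: "mlift b m x \<Longrightarrow> (\<And>M n. b M n \<Longrightarrow> mass n = 1) \<Longrightarrow> mass x = mass m"
  by (induction rule: mlift.induct) auto

lemma mlift_iff_lists:
  "mlift b m x \<longleftrightarrow> (\<exists>xs ns. m = mset xs \<and> x = sum_list (map2 (\<lambda>x n. scale (fst x) n) xs ns) \<and>
     list_all2 (\<lambda>x n. b (snd x) n) xs ns)"
proof
  assume "mlift b m x"
  then show "\<exists>xs ns. m = mset xs \<and> x = sum_list (map2 (\<lambda>x n. scale (fst x) n) xs ns) \<and>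
     list_all2 (\<lambda>x n. b (snd x) n) xs ns"
  proof (induction rule: mlift.induct)
    case empty
    show ?case by (intro exI[of _ "[]"]) simp
  next
    case (add M n m x p)
    then obtain xs ns where "m = mset xs" "x = sum_list (map2 (\<lambda>x n. scale (fst x) n) xs ns)"
      "list_all2 (\<lambda>x n. b (snd x) n) xs ns" by blast
    with add.hyps(1) show ?case
      by (intro exI[of _ "(p, M) # xs"] exI[of _ "n # ns"]) simp
  qed
next
  assume "\<exists>xs ns. m = mset xs \<and> x = sum_list (map2 (\<lambda>x n. scale (fst x) n) xs ns) \<and>
     list_all2 (\<lambda>x n. b (snd x) n) xs ns"
  then obtain xs ns where "m = mset xs" "x = sum_list (map2 (\<lambda>x n. scale (fst x) n) xs ns)"
    "list_all2 (\<lambda>x n. b (snd x) n) xs ns" by blast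
  moreover have "list_all2 (\<lambda>x n. b (snd x) n) xs ns \<Longrightarrow>
      mlift b (mset xs) (sum_list (map2 (\<lambda>x n. scale (fst x) n) xs ns))"
    by (induction rule: list_all2_induct) (auto intro: mlift.intros simp: mlift.add[of b _ _ _ _ "fst _", simplified])
  ultimately show "mlift b m x" by simp
qed

lemma lift_eq_mlift: "lift r = mlift (\<lambda>M n. n = dirac M \<or> r M n)"
proof (intro ext iffI)
  fix m x
  assume "lift r m x"
  then show "mlift (\<lambda>M n. n = dirac M \<or> r M n) m x"
  proof (induction rule: lift.induct)
    case (sum xs ns)
    then have "list_all2 (\<lambda>x n. n = dirac (snd x) \<or> r (snd x) n) xs ns"
      by (auto simp: mlift_dirac_iff elim!: list_all2_mono)
    then show ?case
      unfolding mlift_iff_lists by blast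
  qed (simp_all add: mlift_dirac_iff)
next
  fix m x
  assume "mlift (\<lambda>M n. n = dirac M \<or> r M n) m x"
  then show "lift r m x"
    unfolding mlift_iff_lists by (auto intro!: lift.sum elim!: list_all2_mono intro: lift.intros)
qed

lemma full_lift_eq_mlift: "full_lift r = mlift (\<lambda>M n. normal M \<and> n = dirac M \<or> r M n)"
proof (intro ext iffI)
  fix m x
  assume "full_lift r m x"
  then show "mlift (\<lambda>M n. normal M \<and> n = dirac M \<or> r M n) m x"
  proof (induction rule: full_lift.induct)
    case (sum xs ns)
    then have "list_all2 (\<lambda>x n. normal (snd x) \<and> n = dirac (snd x) \<or> r (snd x) n) xs ns"
      by (auto simp: mlift_dirac_iff elim!: list_all2_mono)
    then show ?case
      unfolding mlift_iff_lists by blast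
  qed (simp_all add: mlift_dirac_iff)
next
  fix m x
  assume "mlift (\<lambda>M n. normal M \<and> n = dirac M \<or> r M n) m x"
  then show "full_lift r m x"
    unfolding mlift_iff_lists by (auto intro!: full_lift.sum elim!: list_all2_mono intro: full_lift.intros)
qed

inductive coupling :: "(trm \<Rightarrow> trm \<Rightarrow> bool) \<Rightarrow> mdist \<Rightarrow> mdist \<Rightarrow> bool" for R where
  empty: "coupling R {#} {#}"
| add: "R M M' \<Longrightarrow> coupling R m m' \<Longrightarrow> coupling R (add_mset (p, M) m) (add_mset (p, M') m')"

lemma coupling_add: "coupling R a b \<Longrightarrow> coupling R c d \<Longrightarrow> coupling R (a + c) (b + d)"
  by (induction rule: coupling.induct) (auto intro: coupling.add)

lemma coupling_scale: "coupling R a b \<Longrightarrow> coupling R (scale q a) (scale q b)"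
  by (induction rule: coupling.induct) (auto intro: coupling.intros)

lemma coupling_dirac: "R M M' \<Longrightarrow> coupling R (dirac M) (dirac M')"
  unfolding dirac_def by (auto intro: coupling.intros)

lemma coupling_refl: "(\<And>M. R M M) \<Longrightarrow> coupling R m m"
  by (induction m) (auto intro: coupling.intros)

lemma coupling_map_trm:
  "coupling R m m' \<Longrightarrow> (\<And>M M'. R M M' \<Longrightarrow> R (f M) (g M')) \<Longrightarrow> coupling R (map_trm f m) (map_trm g m')"
  by (induction rule: coupling.induct) (auto intro: coupling.intros)

lemma mlift_map_trm_pointwise:
  "(\<And>x. x \<in># m \<Longrightarrow> b (f (snd x)) (g (snd x))) \<Longrightarrow>
   mlift b (map_trm f m) (\<Sum>x\<in>#m. scale (fst x) (g (snd x)))"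
  by (induction m) (auto intro: mlift.empty mlift.add[of b _ _ _ _ "fst _", simplified])

lemma lift_refl: "lift r m m"
  unfolding lift_eq_mlift by (rule mlift_refl) simp

lemma full_lift_imp_lift: "full_lift r m x \<Longrightarrow> lift r m x"
  unfolding lift_eq_mlift full_lift_eq_mlift by (erule mlift_mono) auto

lemma lift_add: "lift r a b \<Longrightarrow> lift r c d \<Longrightarrow> lift r (a + c) (b + d)"
  unfolding lift_eq_mlift by (rule mlift_add)

lemma lift_scale: "lift r a b \<Longrightarrow> lift r (scale p a) (scale p b)"
  unfolding lift_eq_mlift by (rule mlift_scale)

lemma lift_emptyD: "lift r {#} x \<Longrightarrow> x = {#}"
  unfolding lift_eq_mlift by (auto elim: mlift.cases)

lemma lift_add_msetE:
  assumes "lift r (add_mset (p, M) m) x"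
  obtains n x' where "n = dirac M \<or> r M n" "lift r m x'" "x = scale p n + x'"
  using assms unfolding lift_eq_mlift by (rule mlift_add_msetE)

lemma lift_steps_add: "(lift r)\<^sup>*\<^sup>* a b \<Longrightarrow> (lift r)\<^sup>*\<^sup>* c d \<Longrightarrow> (lift r)\<^sup>*\<^sup>* (a + c) (b + d)"
proof -
  assume ab: "(lift r)\<^sup>*\<^sup>* a b" and cd: "(lift r)\<^sup>*\<^sup>* c d"
  from ab have "(lift r)\<^sup>*\<^sup>* (a + c) (b + c)"
    by induction (auto intro: rtranclp.rtrancl_into_rtrancl lift_add lift_refl)
  moreover from cd have "(lift r)\<^sup>*\<^sup>* (b + c) (b + d)"
    by induction (auto intro: rtranclp.rtrancl_into_rtrancl lift_add lift_refl)
  ultimately show ?thesis by (rule rtranclp_trans)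
qed

lemma lift_steps_scale: "(lift r)\<^sup>*\<^sup>* a b \<Longrightarrow> (lift r)\<^sup>*\<^sup>* (scale p a) (scale p b)"
  by (induction rule: rtranclp_induct) (auto intro: rtranclp.rtrancl_into_rtrancl lift_scale)

lemma lift_steps_add_mset:
  "(lift r)\<^sup>*\<^sup>* (dirac M) n \<Longrightarrow> (lift r)\<^sup>*\<^sup>* m x \<Longrightarrow> (lift r)\<^sup>*\<^sup>* (add_mset (p, M) m) (scale p n + x)"
  using lift_steps_add[OF lift_steps_scale] by fastforce

section \<open>Surface reduction and the strategy E\<close>

inductive surface_red :: "trm \<Rightarrow> mdist \<Rightarrow> bool" where
  beta: "is_value V \<Longrightarrow> surface_red (App (Lam M) V) (dirac (subst M 0 V))"
| choice: "surface_red (Choice M N) {#(1/2, M), (1/2, N)#}"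
| appL: "surface_red M m \<Longrightarrow> surface_red (App M N) (map_trm (\<lambda>P. App P N) m)"
| appR: "surface_red N m \<Longrightarrow> surface_red (App M N) (map_trm (\<lambda>P. App M P) m)"

inductive_cases surface_red_LamE: "surface_red (Lam M) m"
inductive_cases surface_red_ChoiceE: "surface_red (Choice M N) m"

lemma surface_red_App_cases:
  assumes "surface_red (App M N) m"
  obtains P where "M = Lam P" "is_value N" "m = dirac (subst P 0 N)"
  | a where "surface_red M a" "m = map_trm (\<lambda>P. App P N) a"
  | b where "surface_red N b" "m = map_trm (App M) b"
  using assms by (cases rule: surface_red.cases) auto

lemma surface_red_not_value: "surface_red M m \<Longrightarrow> \<not> is_value M"
  by (cases rule: surface_red.cases) auto

lemma surface_step_iff: "surface_step M m \<longleftrightarrow> surface_red M m"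
proof
  have "beta_weak M M' \<Longrightarrow> surface_red M (dirac M')" for M'
    by (induction rule: beta_weak.induct)
      (auto intro: surface_red.beta dest: surface_red.appL surface_red.appR)
  moreover have "oplus_step M m \<Longrightarrow> surface_red M m"
    by (induction rule: oplus_step.induct) (auto intro: surface_red.intros)
  ultimately show "surface_step M m \<Longrightarrow> surface_red M m"
    unfolding surface_step_def by blast
next
  show "surface_red M m \<Longrightarrow> surface_step M m"
    unfolding surface_step_def
    by (induction rule: surface_red.induct)
      (auto intro: beta_weak.intros oplus_step.intros)
qed

lemma surface_red_mass: "surface_red M m \<Longrightarrow> nonneg m \<and> mass m = 1"
  by (induction rule: surface_red.induct) auto

text \<open>Two surface steps in the two sides of an application commute: both orders lead to the
  product distribution.\<close>
lemma surface_red_App_join: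
  assumes "surface_red M a" "surface_red N b"
  shows "\<exists>z. mlift surface_red (map_trm (\<lambda>P. App P N) a) z \<and> mlift surface_red (map_trm (App M) b) z"
proof -
  have left: "mlift surface_red (map_trm (\<lambda>P. App P N) a) (\<Sum>x\<in>#a. scale (fst x) (map_trm (App (snd x)) b))"
    using assms(2) by (intro mlift_map_trm_pointwise) (simp add: surface_red.appR)
  have right: "mlift surface_red (map_trm (App M) b) (\<Sum>y\<in>#b. scale (fst y) (map_trm (\<lambda>P. App P (snd y)) a))"
    using assms(1) by (intro mlift_map_trm_pointwise) (simp add: surface_red.appL)
  have expand: "scale p (map_trm g c) = (\<Sum>y\<in>#c. {#(p * fst y, g (snd y))#})" for p g c
    by (induction c) auto
  have "(\<Sum>x\<in>#a. scale (fst x) (map_trm (App (snd x)) b)) =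
        (\<Sum>y\<in>#b. scale (fst y) (map_trm (\<lambda>P. App P (snd y)) a))"
    unfolding expand by (subst sum_mset.swap) (simp add: mult.commute)
  with left right show ?thesis by auto
qed

lemma surface_red_diamond:
  "surface_red M a \<Longrightarrow> surface_red M b \<Longrightarrow> a \<noteq> b \<Longrightarrow>
   \<exists>z. mlift surface_red a z \<and> mlift surface_red b z"
proof (induction arbitrary: b rule: surface_red.induct)
  case (beta V P)
  from beta.prems(1) show ?case
    by (cases rule: surface_red_App_cases)
      (use beta in \<open>auto elim: surface_red_LamE dest: surface_red_not_value\<close>)
next
  case (choice M N)
  then show ?case by (auto elim: surface_red_ChoiceE)
next
  case (appL M m N)
  from appL.prems(1) show ?case
  proof (cases rule: surface_red_App_cases)
    case (2 m')
    with appL.IH appL.prems(2) obtain z where "mlift surface_red m z" "mlift surface_red m' z"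
      by auto
    with 2 show ?thesis
      by (auto intro!: exI[of _ "map_trm (\<lambda>P. App P N) z"] mlift_map_trm surface_red.appL)
  next
    case (3 m')
    with appL.hyps show ?thesis using surface_red_App_join by blast
  qed (use appL.hyps in \<open>auto elim: surface_red_LamE\<close>)
next
  case (appR N m M)
  from appR.prems(1) show ?case
  proof (cases rule: surface_red_App_cases)
    case (2 m')
    with appR.hyps show ?thesis using surface_red_App_join by blast
  next
    case (3 m')
    with appR.IH appR.prems(2) obtain z where "mlift surface_red m z" "mlift surface_red m' z"
      by auto
    with 3 show ?thesis
      by (auto intro!: exI[of _ "map_trm (App M) z"] mlift_map_trm surface_red.appR)
  qed (use appR.hyps surface_red_not_value in blast)
qed

lemma surface_normal_iff: "surface_normal M \<longleftrightarrow> weak_normal M \<and> \<not> (\<exists>m. oplus_step M m)"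
  unfolding surface_normal_def surface_step_def weak_normal_def by blast

inductive_cases oplus_step_AppE: "oplus_step (App M N) m"
inductive_cases oplus_step_LamE: "oplus_step (Lam M) m"

lemma U_step_oplus_step_reflect:
  "U_step P P' \<Longrightarrow> weak_normal P \<Longrightarrow> oplus_step P' m \<Longrightarrow> \<exists>m'. oplus_step P m'"
proof (induction arbitrary: m rule: U_step.induct)
  case (appL P Q P')
  then have "weak_normal P" by (simp add: weak_normal_App)
  from appL.prems(2) show ?case
    by (cases rule: oplus_step_AppE)
      (use appL.IH \<open>weak_normal P\<close> in \<open>auto intro: oplus_step.appL oplus_step.appR\<close>)
next
  case (appR P Q Q')
  then have "weak_normal Q" by (simp add: weak_normal_App)
  from appR.prems(2) show ?case
    by (cases rule: oplus_step_AppE)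
      (use appR.IH \<open>weak_normal Q\<close> in \<open>auto intro: oplus_step.appL oplus_step.appR\<close>)
qed (auto simp: weak_normal_def elim: oplus_step_LamE intro: oplus_step.root)

lemma U_step_surface_normal: "surface_normal M \<Longrightarrow> U_step M M' \<Longrightarrow> surface_normal M'"
  using U_step_preserves_shape U_step_oplus_step_reflect unfolding surface_normal_iff by blast

lemma E_step_iff:
  "E_step M m \<longleftrightarrow> surface_red M m \<or> (surface_normal M \<and> (\<exists>M'. U_step M M' \<and> m = dirac M'))"
  unfolding E_step_def surface_normal_def surface_step_iff by auto

lemma E_step_not_normal: "E_step M m \<Longrightarrow> \<not> normal M"
  unfolding E_step_def normal_def step_def surface_step_def
  using U_step_beta_full beta_weak_beta_full by blast

lemma E_step_exists: "\<not> normal M \<Longrightarrow> \<exists>m. E_step M m"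
proof -
  assume "\<not> normal M"
  then obtain m where m: "step M m" unfolding normal_def by blast
  show ?thesis
  proof (cases "surface_normal M")
    case True
    with m obtain M' where "beta_full M M'"
      unfolding step_def surface_normal_def surface_step_def by blast
    with True show ?thesis
      unfolding E_step_def by (blast dest: beta_full_U_step)
  qed (auto simp: E_step_def surface_normal_def)
qed

lemma E_step_mass: "E_step M m \<Longrightarrow> nonneg m \<and> mass m = 1"
  unfolding E_step_iff using surface_red_mass by auto

lemma E_step_diamond:
  "E_step M a \<Longrightarrow> E_step M b \<Longrightarrow> a \<noteq> b \<Longrightarrow> \<exists>z. mlift E_step a z \<and> mlift E_step b z"
proof (cases "surface_normal M")
  case True
  assume "E_step M a" "E_step M b" "a \<noteq> b"
  with True obtain A B where AB: "U_step M A" "U_step M B" "a = dirac A" "b = dirac B" "A \<noteq> B"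
    unfolding E_step_def by blast
  then obtain C where "U_step A C" "U_step B C"
    using U_step_diamond by blast
  with True AB have "E_step A (dirac C)" "E_step B (dirac C)"
    unfolding E_step_def by (auto intro: U_step_surface_normal)
  with AB show ?thesis by (auto simp: mlift_dirac_iff)
next
  case False
  assume "E_step M a" "E_step M b" "a \<noteq> b"
  with False have "surface_red M a" "surface_red M b"
    unfolding E_step_iff by auto
  with \<open>a \<noteq> b\<close> obtain z where "mlift surface_red a z" "mlift surface_red b z"
    using surface_red_diamond by blast
  then show ?thesis by (meson E_step_iff mlift_mono)
qed

lemma beta_weak_E_step: "beta_weak M M' \<Longrightarrow> E_step M (dirac M')"
  and oplus_step_E_step: "oplus_step M m \<Longrightarrow> E_step M m"
  unfolding E_step_iff by (auto simp: surface_step_iff[symmetric] surface_step_def)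

lemma normal_beta_normal: "normal M \<Longrightarrow> beta_normal M"
  unfolding normal_def beta_normal_def step_def by blast

lemma normal_surface_normal: "normal M \<Longrightarrow> surface_normal M"
  unfolding normal_def surface_normal_def step_def surface_step_def using beta_weak_beta_full by blast

section \<open>Random descent for E\<close>

lemma full_lift_E_exists: "\<exists>x. full_lift E_step m x"
proof (induction m)
  case empty
  then show ?case by (auto simp: full_lift_eq_mlift intro: mlift.empty)
next
  case (add a m)
  then obtain x where "full_lift E_step m x" by blast
  moreover obtain n where "normal (snd a) \<and> n = dirac (snd a) \<or> E_step (snd a) n"
    using E_step_exists by blast
  ultimately have "full_lift E_step (add_mset (fst a, snd a) m) (scale (fst a) n + x)"
    unfolding full_lift_eq_mlift by (rule mlift.add[rotated])
  then show ?case by auto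
qed

lemma lift_E_nonneg: "lift E_step m x \<Longrightarrow> nonneg m \<Longrightarrow> nonneg x"
  unfolding lift_eq_mlift by (erule mlift_nonneg) (auto dest: E_step_mass)

lemma full_lift_E_nonneg: "full_lift E_step m x \<Longrightarrow> nonneg m \<Longrightarrow> nonneg x"
  using full_lift_imp_lift lift_E_nonneg by blast

lemma full_lift_E_mass: "full_lift E_step m x \<Longrightarrow> mass x = mass m"
  unfolding full_lift_eq_mlift by (erule mlift_mass) (auto dest: E_step_mass)

lemma mlift_E_step_obs_Nnf: "mlift E_step a z \<Longrightarrow> obs_Nnf a = (\<lambda>_. 0)"
proof (rule ext, rule obs_Nnf_eq_0)
  fix x
  assume "mlift E_step a z" "x \<in># a"
  then show "\<not> normal (snd x)"
    by (induction rule: mlift.induct) (auto dest: E_step_not_normal)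
qed

lemma E_step_local_join:
  assumes "y = dirac M \<or> E_step M y" and "normal M \<and> x = dirac M \<or> E_step M x"
  shows "(\<exists>z. full_lift E_step y z \<and> lift E_step x z) \<and> obs_Nnf y \<le> obs_Nnf x"
proof (cases "E_step M y")
  case False
  with assms have y: "y = dirac M" by blast
  show ?thesis
  proof (cases "normal M")
    case True
    with assms(2) have "x = dirac M" by (auto dest: E_step_not_normal)
    with y show ?thesis using full_lift_E_exists full_lift_imp_lift by blast
  next
    case False
    with assms(2) have x: "E_step M x" by blast
    then have "full_lift E_step y x"
      unfolding y full_lift_eq_mlift by (simp add: mlift_dirac_iff)
    moreover have "obs_Nnf y \<le> obs_Nnf x"
      using False x E_step_mass obs_Nnf_nonneg by (auto simp: y obs_Nnf_dirac le_fun_def)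
    ultimately show ?thesis using lift_refl by blast
  qed
next
  case Ey: True
  with assms(2) have Ex: "E_step M x" by (auto dest: E_step_not_normal)
  show ?thesis
  proof (cases "x = y")
    case True
    then show ?thesis using full_lift_E_exists full_lift_imp_lift by blast
  next
    case False
    with Ey Ex obtain z where z: "mlift E_step y z" "mlift E_step x z"
      using E_step_diamond by metis
    then have "full_lift E_step y z" "lift E_step x z"
      unfolding lift_eq_mlift full_lift_eq_mlift by (auto elim!: mlift_mono)
    moreover have "obs_Nnf y = (\<lambda>_. 0)" "obs_Nnf x = (\<lambda>_. 0)"
      using z by (auto intro: mlift_E_step_obs_Nnf)
    ultimately show ?thesis by auto
  qed
qed

lemma lift_full_lift_E_join:
  "lift E_step m y \<Longrightarrow> full_lift E_step m x \<Longrightarrow> nonneg m \<Longrightarrow>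
   (\<exists>z. full_lift E_step y z \<and> lift E_step x z) \<and> obs_Nnf y \<le> obs_Nnf x"
  unfolding lift_eq_mlift full_lift_eq_mlift
proof (induction arbitrary: x rule: mlift.induct)
  case empty
  then have "x = {#}" by (cases rule: mlift.cases) auto
  then show ?case by (auto intro: mlift.empty)
next
  case (add M n m y p)
  from add.prems(1) obtain n' x' where
    n': "normal M \<and> n' = dirac M \<or> E_step M n'" and x': "mlift (\<lambda>M n. normal M \<and> n = dirac M \<or> E_step M n) m x'" and x: "x = scale p n' + x'"
    by (rule mlift_add_msetE)
  obtain z1 where z1: "full_lift E_step n z1" "lift E_step n' z1" and le1: "obs_Nnf n \<le> obs_Nnf n'"
    using E_step_local_join[OF add.hyps(1) n'] by blast
  obtain z0 where z0: "mlift (\<lambda>M n. normal M \<and> n = dirac M \<or> E_step M n) y z0"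
      "mlift (\<lambda>M n. n = dirac M \<or> E_step M n) x' z0" and le0: "obs_Nnf y \<le> obs_Nnf x'"
    using add.IH[OF x'] add.prems(2) by auto
  have "mlift (\<lambda>M n. normal M \<and> n = dirac M \<or> E_step M n) (scale p n + y) (scale p z1 + z0)"
    using z1(1) z0(1) unfolding full_lift_eq_mlift by (intro mlift_add mlift_scale)
  moreover have "mlift (\<lambda>M n. n = dirac M \<or> E_step M n) x (scale p z1 + z0)"
    using z1(2) z0(2) unfolding x lift_eq_mlift by (intro mlift_add mlift_scale)
  moreover have "obs_Nnf (scale p n + y) \<le> obs_Nnf x"
    using le1 le0 add.prems(2) by (auto simp: x le_fun_def intro: add_mono mult_left_mono)
  ultimately show ?case by blast
qed

lemma full_lift_E_relpowp_exists: "\<exists>x. (full_lift E_step ^^ k) m x"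
proof (induction k)
  case (Suc k)
  then obtain y where "(full_lift E_step ^^ k) m y" by blast
  moreover obtain x where "full_lift E_step y x" using full_lift_E_exists by blast
  ultimately show ?case by (auto intro: relpowp_Suc_I)
qed simp

text \<open>Random descent: the first steps of the two runs are joined by some \<open>z\<close>; completing a full run
  of length \<open>k - 1\<close> from \<open>z\<close> yields a full run of length \<open>k\<close> from the first successor of the partial
  run and a partial run of length \<open>k\<close> from the first successor of the full run, so the induction
  hypothesis applies twice.\<close>
lemma obs_Nnf_lift_E_relpowp_le:
  "(lift E_step ^^ k) m y \<Longrightarrow> (full_lift E_step ^^ k) m x \<Longrightarrow> nonneg m \<Longrightarrow> obs_Nnf y \<le> obs_Nnf x"
proof (induction k arbitrary: m y x)
  case (Suc k)
  obtain y1 where y1: "lift E_step m y1" "(lift E_step ^^ k) y1 y"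
    using relpowp_Suc_D2[OF Suc.prems(1)] by blast
  obtain x1 where x1: "full_lift E_step m x1" "(full_lift E_step ^^ k) x1 x"
    using relpowp_Suc_D2[OF Suc.prems(2)] by blast
  obtain z where z: "full_lift E_step y1 z" "lift E_step x1 z" and le: "obs_Nnf y1 \<le> obs_Nnf x1"
    using lift_full_lift_E_join[OF y1(1) x1(1) Suc.prems(3)] by blast
  have nonneg: "nonneg y1" "nonneg x1"
    using y1(1) x1(1) Suc.prems(3) lift_E_nonneg full_lift_E_nonneg by blast+
  show ?case
  proof (cases k)
    case 0
    with y1 x1 le show ?thesis by simp
  next
    case (Suc k')
    obtain w where w: "(full_lift E_step ^^ k') z w"
      using full_lift_E_relpowp_exists by blast
    have "(lift E_step ^^ k') z w"
      using relpowp_mono[of "full_lift E_step" "lift E_step", OF full_lift_imp_lift w] .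
    with Suc z w have "(full_lift E_step ^^ k) y1 w" "(lift E_step ^^ k) x1 w"
      by (simp_all only: relpowp_Suc_I2)
    with Suc.IH y1(2) x1(2) nonneg have "obs_Nnf y \<le> obs_Nnf w" "obs_Nnf w \<le> obs_Nnf x"
      by blast+
    then show ?thesis by (rule order.trans)
  qed
qed simp

lemma full_lift_E_run_exists: "\<exists>ms. ms 0 = m \<and> (\<forall>n. full_lift E_step (ms n) (ms (Suc n)))"
proof -
  define ms where "ms = rec_nat m (\<lambda>_ x. SOME y. full_lift E_step x y)"
  have "full_lift E_step (ms n) (ms (Suc n))" for n
    unfolding ms_def using full_lift_E_exists by (simp add: someI_ex)
  moreover have "ms 0 = m" by (simp add: ms_def)
  ultimately show ?thesis by blast
qed

lemma full_lift_E_run_obs_Nnf_le_SUP: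
  assumes "ms 0 = m" "\<And>n. full_lift E_step (ms n) (ms (Suc n))" "nonneg m"
  shows "obs_Nnf (ms j) N \<le> (SUP n. obs_Nnf (ms n) N)"
proof -
  have "nonneg (ms n) \<and> mass (ms n) = mass m" for n
    by (induction n) (simp_all add: assms(1,3) full_lift_E_mass[OF assms(2)] full_lift_E_nonneg[OF assms(2)])
  then have "obs_Nnf (ms n) N \<le> mass m" for n
    using obs_Nnf_le_mass by metis
  then show ?thesis by (intro cSUP_upper bdd_aboveI) auto
qed

lemma lift_E_steps_obs_Nnf_le_full_lift_E_run:
  assumes "(lift E_step)\<^sup>*\<^sup>* m z" "ms 0 = m" "\<And>n. full_lift E_step (ms n) (ms (Suc n))" "nonneg m"
  shows "\<exists>j. obs_Nnf z \<le> obs_Nnf (ms j)"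
proof -
  obtain j where "(lift E_step ^^ j) m z"
    using assms(1) by (auto simp: rtranclp_power)
  moreover have "(full_lift E_step ^^ j) m (ms j)"
    by (induction j) (auto simp: assms(2) intro: relpowp_Suc_I assms(3))
  ultimately show ?thesis
    using obs_Nnf_lift_E_relpowp_le assms(4) by blast
qed

section \<open>Simulating reduction by E\<close>

lemma beta_weak_steps_lift_E: "beta_weak\<^sup>*\<^sup>* M M' \<Longrightarrow> (lift E_step)\<^sup>*\<^sup>* (dirac M) (dirac M')"
  by (induction rule: rtranclp_induct)
    (auto intro: rtranclp.rtrancl_into_rtrancl lift.step beta_weak_E_step)

lemma U_steps_lift_E:
  "U_step\<^sup>*\<^sup>* M M' \<Longrightarrow> surface_normal M \<Longrightarrow>
   (lift E_step)\<^sup>*\<^sup>* (dirac M) (dirac M') \<and> surface_normal M'"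
proof (induction rule: rtranclp_induct)
  case (step M' M'')
  then have "E_step M' (dirac M'')"
    unfolding E_step_def by auto
  with step show ?case
    by (auto intro: rtranclp.rtrancl_into_rtrancl lift.step U_step_surface_normal)
qed simp

lemma oplus_step_ipar_postpone:
  "oplus_step N n \<Longrightarrow> ipar M N \<Longrightarrow> \<exists>m. oplus_step M m \<and> coupling par m n"
proof (induction arbitrary: M rule: oplus_step.induct)
  case (root P' Q')
  then obtain P Q where "M = Choice P Q" "par P P'" "par Q Q'"
    by (auto elim: ipar_ChoiceE)
  then show ?case
    by (auto intro!: oplus_step.root coupling.intros)
next
  case (appL P' m' Q')
  then obtain P Q where M: "M = App P Q" "ipar P P'" "ipar Q Q'"
    by (auto elim: ipar_AppE)
  with appL.IH obtain m where "oplus_step P m" "coupling par m m'"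
    by blast
  with M show ?case
    by (auto intro!: oplus_step.appL coupling_map_trm par_App dest: ipar_par)
next
  case (appR Q' m' P')
  then obtain P Q where M: "M = App P Q" "ipar P P'" "ipar Q Q'"
    by (auto elim: ipar_AppE)
  with appR.IH obtain m where "oplus_step Q m" "coupling par m m'"
    by blast
  with M show ?case
    by (auto intro!: oplus_step.appR coupling_map_trm par_App dest: ipar_par)
qed

lemma par_E_step_postpone:
  assumes "par M N" and "E_step N n"
  shows "\<exists>m. (lift E_step)\<^sup>*\<^sup>* (dirac M) m \<and> coupling par m n"
proof -
  from par_factorise[OF assms(1)] obtain M1 where M1: "beta_weak\<^sup>*\<^sup>* M M1" "ipar M1 N"
    by blast
  then have to_M1: "(lift E_step)\<^sup>*\<^sup>* (dirac M) (dirac M1)"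
    by (simp add: beta_weak_steps_lift_E)
  consider (U) N' where "surface_normal N" "U_step N N'" "n = dirac N'"
    | (beta) N' where "beta_weak N N'" "n = dirac N'"
    | (oplus) "oplus_step N n"
    using assms(2) unfolding E_step_def surface_step_def by blast
  then show ?thesis
  proof cases
    case U
    with M1 obtain M2 where "U_step\<^sup>*\<^sup>* M1 M2" "par M2 N'" "surface_normal M1"
      by (blast dest: ipar_par par_U_step_postpone ipar_surface_normal)
    with U to_M1 show ?thesis
      by (meson U_steps_lift_E coupling_dirac rtranclp_trans)
  next
    case beta
    with M1 obtain M2 where "beta_weak M1 M2" "par M2 N'"
      using beta_weak_ipar_postpone by blast
    with beta to_M1 show ?thesis
      by (meson beta_weak_E_step lift.step coupling_dirac rtranclp.rtrancl_into_rtrancl)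
  next
    case oplus
    with M1 obtain m where "oplus_step M1 m" "coupling par m n"
      using oplus_step_ipar_postpone by blast
    with to_M1 show ?thesis
      by (meson oplus_step_E_step lift.step rtranclp.rtrancl_into_rtrancl)
  qed
qed

lemma coupling_par_lift_E_postpone:
  "coupling par m' m \<Longrightarrow> lift E_step m n \<Longrightarrow> \<exists>n'. (lift E_step)\<^sup>*\<^sup>* m' n' \<and> coupling par n' n"
proof (induction arbitrary: n rule: coupling.induct)
  case empty
  then show ?case by (auto dest: lift_emptyD intro: coupling.empty)
next
  case (add M N m' m p)
  from add.prems obtain k n0 where k: "k = dirac N \<or> E_step N k" and "lift E_step m n0"
    and n: "n = scale p k + n0"
    by (rule lift_add_msetE)
  with add.IH obtain n0' where n0': "(lift E_step)\<^sup>*\<^sup>* m' n0'" "coupling par n0' n0"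
    by blast
  from k obtain k' where k': "(lift E_step)\<^sup>*\<^sup>* (dirac M) k'" "coupling par k' k"
    using add.hyps(1) par_E_step_postpone coupling_dirac by blast
  have "(lift E_step)\<^sup>*\<^sup>* (add_mset (p, M) m') (scale p k' + n0')"
    using k'(1) n0'(1) by (rule lift_steps_add_mset)
  moreover have "coupling par (scale p k' + n0') n"
    unfolding n using k'(2) n0'(2) by (intro coupling_add coupling_scale)
  ultimately show ?case by blast
qed

lemma par_normal_lift_E: "par M N \<Longrightarrow> normal N \<Longrightarrow> (lift E_step)\<^sup>*\<^sup>* (dirac M) (dirac N)"
proof -
  assume "par M N" "normal N"
  then obtain M1 where "beta_weak\<^sup>*\<^sup>* M M1" "ipar M1 N"
    using par_factorise by blast
  moreover from calculation \<open>normal N\<close> have "U_step\<^sup>*\<^sup>* M1 N" "surface_normal M1"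
    by (auto intro: par_beta_normal_U_steps ipar_par normal_beta_normal ipar_surface_normal normal_surface_normal)
  ultimately show ?thesis
    by (meson U_steps_lift_E beta_weak_steps_lift_E rtranclp_trans)
qed

text \<open>A pending parallel reduction does not affect the observation: if its target is normal, E
  reaches it; otherwise its source is not normal either, as normal terms only reduce to
  themselves.\<close>
lemma coupling_par_obs_Nnf:
  "coupling par m m' \<Longrightarrow> \<exists>z. (lift E_step)\<^sup>*\<^sup>* m z \<and> obs_Nnf m' = obs_Nnf z"
proof (induction rule: coupling.induct)
  case empty
  then show ?case by blast
next
  case (add M M' m m' p)
  then obtain z where z: "(lift E_step)\<^sup>*\<^sup>* m z" "obs_Nnf m' = obs_Nnf z" by blast
  show ?case
  proof (cases "normal M'")
    case True
    with add.hyps(1) have "(lift E_step)\<^sup>*\<^sup>* (add_mset (p, M) m) (add_mset (p, M') z)"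
      using lift_steps_add_mset[OF par_normal_lift_E z(1)] by simp
    with z(2) show ?thesis by auto
  next
    case False
    with add.hyps(1) have "\<not> normal M"
      using par_beta_normal_eq normal_beta_normal by blast
    with False z have "(lift E_step)\<^sup>*\<^sup>* (add_mset (p, M) m) (add_mset (p, M) z)"
      "obs_Nnf (add_mset (p, M') m') = obs_Nnf (add_mset (p, M) z)"
      using lift_steps_add_mset[OF rtranclp.rtrancl_refl z(1)] by auto
    then show ?thesis by blast
  qed
qed

lemma lift_E_steps_coupling_par:
  "(lift E_step)\<^sup>*\<^sup>* m z \<Longrightarrow> coupling par m' m \<Longrightarrow>
   \<exists>z'. (lift E_step)\<^sup>*\<^sup>* m' z' \<and> obs_Nnf z = obs_Nnf z'"
proof (induction arbitrary: m' rule: converse_rtranclp_induct)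
  case base
  then show ?case using coupling_par_obs_Nnf by blast
next
  case (step m n)
  then obtain n' where "(lift E_step)\<^sup>*\<^sup>* m' n'" "coupling par n' n"
    using coupling_par_lift_E_postpone by blast
  with step.IH show ?case
    by (meson rtranclp_trans)
qed

lemma lift_step_coupling_par: "lift step m n \<Longrightarrow> \<exists>n'. lift E_step m n' \<and> coupling par n' n"
  unfolding lift_eq_mlift
proof (induction rule: mlift.induct)
  case empty
  then show ?case by (auto intro: mlift.empty coupling.empty)
next
  case (add M k m n p)
  have "\<exists>k'. (k' = dirac M \<or> E_step M k') \<and> coupling par k' k"
    using add.hyps(1) unfolding step_def
    by (auto intro: coupling_dirac par_refl beta_full_par coupling_refl oplus_step_E_step)
  with add.IH obtain k' n' where "k' = dirac M \<or> E_step M k'" "coupling par k' k"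
    "mlift (\<lambda>M n. n = dirac M \<or> E_step M n) m n'" "coupling par n' n"
    by blast
  then show ?case
    by (auto intro!: mlift.add coupling_add coupling_scale)
qed

lemma maximal_seq_lift_step_simulation:
  assumes "maximal_seq (lift step) m ms"
  shows "\<exists>z. (lift E_step)\<^sup>*\<^sup>* m z \<and> obs_Nnf (ms n) = obs_Nnf z"
proof -
  have "(lift E_step)\<^sup>*\<^sup>* (ms n) z \<Longrightarrow> \<exists>z'. (lift E_step)\<^sup>*\<^sup>* m z' \<and> obs_Nnf z = obs_Nnf z'" for z
  proof (induction n arbitrary: z)
    case 0
    then show ?case using assms unfolding maximal_seq_def by auto
  next
    case (Suc n)
    have "lift step (ms n) (ms (Suc n))"
      using assms lift_refl unfolding maximal_seq_def by metis
    with Suc.prems obtain n' z' where "lift E_step (ms n) n'" "coupling par n' (ms (Suc n))"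
      "(lift E_step)\<^sup>*\<^sup>* n' z'" "obs_Nnf z = obs_Nnf z'"
      by (meson lift_step_coupling_par lift_E_steps_coupling_par)
    with Suc.IH show ?case
      by (metis converse_rtranclp_into_rtranclp)
  qed
  then show ?thesis by blast
qed

theorem mainTheorem9:
  fixes m :: mdist and r :: "trm \<Rightarrow> real"
  assumes "is_mdist m"
    and "obs_rel (lift step) m r"
  shows "\<exists>s. obs_rel (full_lift E_step) m s \<and> r \<le> s"
proof -
  from assms(2) obtain ms' where ms': "maximal_seq (lift step) m ms'"
    and r: "r = (\<lambda>N. SUP n. obs_Nnf (ms' n) N)"
    unfolding obs_rel_def by blast
  obtain ms where ms: "ms 0 = m" "\<And>n. full_lift E_step (ms n) (ms (Suc n))"
    using full_lift_E_run_exists by blast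
  have nonneg: "nonneg m"
    using assms(1) unfolding is_mdist_def nonneg_def by auto
  define s where "s = (\<lambda>N. SUP n. obs_Nnf (ms n) N)"
  have "obs_rel (full_lift E_step) m s"
    unfolding obs_rel_def maximal_seq_def s_def using ms by blast
  moreover have "r N \<le> s N" for N
    unfolding r s_def
  proof (rule cSUP_least)
    fix n
    obtain z j where "obs_Nnf (ms' n) = obs_Nnf z" "obs_Nnf z \<le> obs_Nnf (ms j)"
      using maximal_seq_lift_step_simulation[OF ms'] lift_E_steps_obs_Nnf_le_full_lift_E_run[OF _ ms nonneg]
      by metis
    then show "obs_Nnf (ms' n) N \<le> (SUP n. obs_Nnf (ms n) N)"
      using full_lift_E_run_obs_Nnf_le_SUP[OF ms nonneg] by (metis le_funD order.trans)
  qed simp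
  ultimately show ?thesis by (auto simp: le_fun_def)
qed

end
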